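(* Let $f\in\mathcal{H}^s_{4,3}$. Then $f\in\mathcal{P}^{s+}_{4,3}$ if and only if $f(0,0,0,1)\ge0$, $f(0,0,1,1)\ge0$, $f(0,1,1,1)\ge0$ and $f(1,1,1,1)\ge0$.
   Context: $\mathcal{H}^s_{4,3}$ is the real vector space of symmetric homogeneous cubic forms in $\mathbb{R}[a,b,c,d]$ (invariant under all permutations of the four variables), and $\mathcal{P}^{s+}_{4,3}=\{f\in\mathcal{H}^s_{4,3}: f(x)\ge0\text{ for all }x\in\mathbb{R}_{\ge0}^4\}$. *)

theory Defs
  imports "HOL-Analysis.Analysis"
begin

text \<open>Cubic forms in the four variables a,b,c,d (coordinates 1..4 of real^4) are
  represented by their polynomial functions: f is a homogeneous cubic form iff it is a
  real linear combination of the degree-3 monomials.\<close>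

definition cubic_form4 :: "(real^4 \<Rightarrow> real) \<Rightarrow> bool" where
  "cubic_form4 f \<longleftrightarrow>
     (\<exists>coef :: nat^4 \<Rightarrow> real. \<forall>x.
        f x = (\<Sum>\<alpha>\<in>{\<alpha>::nat^4. (\<Sum>i\<in>UNIV. \<alpha>$i) = 3}. coef \<alpha> * (\<Prod>i\<in>UNIV. (x$i) ^ (\<alpha>$i))))"

definition symmetric4 :: "(real^4 \<Rightarrow> real) \<Rightarrow> bool" where
  "symmetric4 f \<longleftrightarrow> (\<forall>\<sigma> x. \<sigma> permutes (UNIV :: 4 set) \<longrightarrow> f (\<chi> i. x $ \<sigma> i) = f x)"

definition H_s_4_3 :: "(real^4 \<Rightarrow> real) set" where
  "H_s_4_3 = {f. cubic_form4 f \<and> symmetric4 f}"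

definition P_splus_4_3 :: "(real^4 \<Rightarrow> real) set" where
  "P_splus_4_3 = {f \<in> H_s_4_3. \<forall>x. (\<forall>i. 0 \<le> x$i) \<longrightarrow> 0 \<le> f x}"

end

theory Submission
  imports Defs
begin

text \<open>Comparing coefficients, a symmetric cubic form in four variables is
  \<open>A m\<^sub>3 + B m\<^sub>2\<^sub>1 + C m\<^sub>1\<^sub>1\<^sub>1\<close> with the monomial symmetric polynomials \<open>m\<^sub>\<lambda>\<close>, so
  it is a linear functional of the point \<open>(m\<^sub>3, m\<^sub>2\<^sub>1, m\<^sub>1\<^sub>1\<^sub>1)\<close>. On the nonnegative
  orthant this point lies in the cone bounded by \<open>m\<^sub>1\<^sub>1\<^sub>1 \<ge> 0\<close>, \<open>m\<^sub>2\<^sub>1 \<ge> 3 m\<^sub>1\<^sub>1\<^sub>1\<close>,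
  \<open>m\<^sub>3 + 3 m\<^sub>1\<^sub>1\<^sub>1 \<ge> m\<^sub>2\<^sub>1\<close> and \<open>3 m\<^sub>3 + 3 m\<^sub>1\<^sub>1\<^sub>1 \<ge> 2 m\<^sub>2\<^sub>1\<close> (the last two checked for
  sorted arguments by substituting successive differences, which leaves polynomials with
  nonnegative coefficients). The extreme rays of this cone are the images of the four test
  points, so a functional nonnegative there is nonnegative on the whole cone.\<close>

lemma vector_4 [simp]:
  "(vector [x, y, z, w] :: 'a::zero^4) $ 1 = x"
  "(vector [x, y, z, w] :: 'a::zero^4) $ 2 = y"
  "(vector [x, y, z, w] :: 'a::zero^4) $ 3 = z"
  "(vector [x, y, z, w] :: 'a::zero^4) $ 4 = w"
  unfolding vector_def by simp_all

lemma vector_4_eta: "vector [v $ 1, v $ 2, v $ 3, v $ 4] = (v :: 'a::zero^4)"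
  unfolding vec_eq_iff by (metis (mono_tags) exhaust_4 vector_4)

lemma prod_4: "prod f (UNIV :: 4 set) = f 1 * f 2 * f 3 * f 4"
  unfolding UNIV_4 by (simp add: ac_simps)

definition cubic_exponents4 :: "(nat \<times> nat \<times> nat \<times> nat) set" where
  "cubic_exponents4 = {(0,0,0,3), (0,0,1,2), (0,0,2,1), (0,0,3,0), (0,1,0,2), (0,1,1,1),
     (0,1,2,0), (0,2,0,1), (0,2,1,0), (0,3,0,0), (1,0,0,2), (1,0,1,1), (1,0,2,0), (1,1,0,1),
     (1,1,1,0), (1,2,0,0), (2,0,0,1), (2,0,1,0), (2,1,0,0), (3,0,0,0)}"

lemma cubic_exponents4_iff: "(a, b, c, d) \<in> cubic_exponents4 \<longleftrightarrow> a + b + c + d = 3"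
proof
  assume h: "a + b + c + d = 3"
  have "a = 0 \<or> a = 1 \<or> a = 2 \<or> a = 3" "b = 0 \<or> b = 1 \<or> b = 2 \<or> b = 3"
       "c = 0 \<or> c = 1 \<or> c = 2 \<or> c = 3"
    using h by arith+
  then show "(a, b, c, d) \<in> cubic_exponents4"
    using h unfolding cubic_exponents4_def by (elim disjE) simp_all
qed (auto simp: cubic_exponents4_def)

definition cubic_poly4 ::
    "(nat \<Rightarrow> nat \<Rightarrow> nat \<Rightarrow> nat \<Rightarrow> real) \<Rightarrow> real \<Rightarrow> real \<Rightarrow> real \<Rightarrow> real \<Rightarrow> real" where
  "cubic_poly4 K x1 x2 x3 x4 =
     K 3 0 0 0 * x1^3 + K 0 3 0 0 * x2^3 + K 0 0 3 0 * x3^3 + K 0 0 0 3 * x4^3 +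
     K 2 1 0 0 * x1^2 * x2 + K 2 0 1 0 * x1^2 * x3 + K 2 0 0 1 * x1^2 * x4 +
     K 1 2 0 0 * x2^2 * x1 + K 0 2 1 0 * x2^2 * x3 + K 0 2 0 1 * x2^2 * x4 +
     K 1 0 2 0 * x3^2 * x1 + K 0 1 2 0 * x3^2 * x2 + K 0 0 2 1 * x3^2 * x4 +
     K 1 0 0 2 * x4^2 * x1 + K 0 1 0 2 * x4^2 * x2 + K 0 0 1 2 * x4^2 * x3 +
     K 1 1 1 0 * x1 * x2 * x3 + K 1 1 0 1 * x1 * x2 * x4 + K 1 0 1 1 * x1 * x3 * x4 +
     K 0 1 1 1 * x2 * x3 * x4"

lemma cubic_form4_imp_cubic_poly4:
  assumes "cubic_form4 f"
  obtains K where "\<And>x1 x2 x3 x4. f (vector [x1, x2, x3, x4]) = cubic_poly4 K x1 x2 x3 x4"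
proof -
  obtain coef :: "nat^4 \<Rightarrow> real" where f_eq: "\<And>x. f x =
      (\<Sum>\<alpha>\<in>{\<alpha>::nat^4. (\<Sum>i\<in>UNIV. \<alpha>$i) = 3}. coef \<alpha> * (\<Prod>i\<in>UNIV. (x$i) ^ (\<alpha>$i)))"
    using assms unfolding cubic_form4_def by blast
  define g where "g = (\<lambda>(a::nat, b::nat, c::nat, d::nat). (vector [a, b, c, d] :: nat^4))"
  have exponents: "{\<alpha>::nat^4. (\<Sum>i\<in>UNIV. \<alpha>$i) = 3} = g ` cubic_exponents4"
  proof (intro set_eqI iffI)
    fix \<alpha> :: "nat^4"
    assume "\<alpha> \<in> {\<alpha>. (\<Sum>i\<in>UNIV. \<alpha>$i) = 3}"
    then have "(\<alpha>$1, \<alpha>$2, \<alpha>$3, \<alpha>$4) \<in> cubic_exponents4"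
      by (simp add: cubic_exponents4_iff sum_4)
    moreover have "\<alpha> = g (\<alpha>$1, \<alpha>$2, \<alpha>$3, \<alpha>$4)"
      by (simp add: g_def vector_4_eta)
    ultimately show "\<alpha> \<in> g ` cubic_exponents4" by blast
  qed (auto simp: cubic_exponents4_iff sum_4 g_def)
  have "inj_on g cubic_exponents4"
    by (auto simp: inj_on_def g_def vec_eq_iff forall_4)
  then have "f (vector [x1, x2, x3, x4]) = cubic_poly4 (\<lambda>a b c d. coef (vector [a, b, c, d])) x1 x2 x3 x4"
    for x1 x2 x3 x4
    unfolding f_eq exponents sum.reindex[OF \<open>inj_on g cubic_exponents4\<close>]
    by (simp add: prod_4 cubic_exponents4_def cubic_poly4_def g_def algebra_simps)
  then show ?thesis using that by blast
qed

lemma cubic_poly4_coeffs_unique: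
  assumes "\<And>x1 x2 x3 x4. cubic_poly4 K x1 x2 x3 x4 = cubic_poly4 L x1 x2 x3 x4"
    and "a + b + c + d = 3"
  shows "K a b c d = L a b c d"
proof -
  \<comment> \<open>Evaluating at \<open>e\<^sub>i\<close>, \<open>e\<^sub>i \<plusminus> e\<^sub>j\<close> and \<open>e\<^sub>i + e\<^sub>j + e\<^sub>k\<close> isolates the coefficients.\<close>
  note ev = assms(1)[unfolded cubic_poly4_def]
  have cubes: "K 3 0 0 0 = L 3 0 0 0" "K 0 3 0 0 = L 0 3 0 0"
              "K 0 0 3 0 = L 0 0 3 0" "K 0 0 0 3 = L 0 0 0 3"
    using ev[of 1 0 0 0] ev[of 0 1 0 0] ev[of 0 0 1 0] ev[of 0 0 0 1] by simp_all
  have squares: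
      "K 2 1 0 0 = L 2 1 0 0 \<and> K 1 2 0 0 = L 1 2 0 0"
      "K 2 0 1 0 = L 2 0 1 0 \<and> K 1 0 2 0 = L 1 0 2 0"
      "K 2 0 0 1 = L 2 0 0 1 \<and> K 1 0 0 2 = L 1 0 0 2"
      "K 0 2 1 0 = L 0 2 1 0 \<and> K 0 1 2 0 = L 0 1 2 0"
      "K 0 2 0 1 = L 0 2 0 1 \<and> K 0 1 0 2 = L 0 1 0 2"
      "K 0 0 2 1 = L 0 0 2 1 \<and> K 0 0 1 2 = L 0 0 1 2"
    using ev[of 1 1 0 0] ev[of 1 "-1" 0 0] ev[of 1 0 1 0] ev[of 1 0 "-1" 0]
      ev[of 1 0 0 1] ev[of 1 0 0 "-1"] ev[of 0 1 1 0] ev[of 0 1 "-1" 0]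
      ev[of 0 1 0 1] ev[of 0 1 0 "-1"] ev[of 0 0 1 1] ev[of 0 0 1 "-1"] cubes
    by auto
  have triples: "K 1 1 1 0 = L 1 1 1 0" "K 1 1 0 1 = L 1 1 0 1"
                "K 1 0 1 1 = L 1 0 1 1" "K 0 1 1 1 = L 0 1 1 1"
    using ev[of 1 1 1 0] ev[of 1 1 0 1] ev[of 1 0 1 1] ev[of 0 1 1 1] cubes squares
    by simp_all
  have "(a, b, c, d) \<in> cubic_exponents4"
    using assms(2) by (simp add: cubic_exponents4_iff)
  then show ?thesis
    unfolding cubic_exponents4_def using cubes squares triples by auto
qed

lemma symmetric4_adjacent_swaps:
  assumes "symmetric4 f"
  shows "f (vector [x2, x1, x3, x4]) = f (vector [x1, x2, x3, x4])"
    and "f (vector [x1, x3, x2, x4]) = f (vector [x1, x2, x3, x4])"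
    and "f (vector [x1, x2, x4, x3]) = f (vector [x1, x2, x3, x4])"
proof -
  have swap: "f (\<chi> i. x $ Transposition.transpose j k i) = f x" for x j k
    using assms permutes_swap_id[of j UNIV k] unfolding symmetric4_def by blast
  have "(\<chi> i. (vector [x1, x2, x3, x4] :: real^4) $ Transposition.transpose 1 2 i) = vector [x2, x1, x3, x4]"
       "(\<chi> i. (vector [x1, x2, x3, x4] :: real^4) $ Transposition.transpose 2 3 i) = vector [x1, x3, x2, x4]"
       "(\<chi> i. (vector [x1, x2, x3, x4] :: real^4) $ Transposition.transpose 3 4 i) = vector [x1, x2, x4, x3]"
    by (simp_all add: vec_eq_iff forall_4 Transposition.transpose_def)
  then show "f (vector [x2, x1, x3, x4]) = f (vector [x1, x2, x3, x4])"
    and "f (vector [x1, x3, x2, x4]) = f (vector [x1, x2, x3, x4])"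
    and "f (vector [x1, x2, x4, x3]) = f (vector [x1, x2, x3, x4])"
    using swap by metis+
qed

definition m3 :: "real \<Rightarrow> real \<Rightarrow> real \<Rightarrow> real \<Rightarrow> real" where
  "m3 x1 x2 x3 x4 = x1^3 + x2^3 + x3^3 + x4^3"

definition m21 :: "real \<Rightarrow> real \<Rightarrow> real \<Rightarrow> real \<Rightarrow> real" where
  "m21 x1 x2 x3 x4 = x1^2 * (x2 + x3 + x4) + x2^2 * (x1 + x3 + x4) +
     x3^2 * (x1 + x2 + x4) + x4^2 * (x1 + x2 + x3)"

definition m111 :: "real \<Rightarrow> real \<Rightarrow> real \<Rightarrow> real \<Rightarrow> real" where
  "m111 x1 x2 x3 x4 = x1 * x2 * x3 + x1 * x2 * x4 + x1 * x3 * x4 + x2 * x3 * x4"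

lemma symmetric_cubic_form4_eq:
  assumes "f \<in> H_s_4_3"
  obtains A B C where "\<And>x1 x2 x3 x4. f (vector [x1, x2, x3, x4]) =
    A * m3 x1 x2 x3 x4 + B * m21 x1 x2 x3 x4 + C * m111 x1 x2 x3 x4"
proof -
  have cubic: "cubic_form4 f" and sym: "symmetric4 f"
    using assms by (auto simp: H_s_4_3_def)
  obtain K where f_eq: "\<And>x1 x2 x3 x4. f (vector [x1, x2, x3, x4]) = cubic_poly4 K x1 x2 x3 x4"
    using cubic_form4_imp_cubic_poly4[OF cubic] by blast
  have "cubic_poly4 (\<lambda>a b c d. K b a c d) x1 x2 x3 x4 = cubic_poly4 K x2 x1 x3 x4"
       "cubic_poly4 (\<lambda>a b c d. K a c b d) x1 x2 x3 x4 = cubic_poly4 K x1 x3 x2 x4"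
       "cubic_poly4 (\<lambda>a b c d. K a b d c) x1 x2 x3 x4 = cubic_poly4 K x1 x2 x4 x3"
    for x1 x2 x3 x4
    unfolding cubic_poly4_def by (simp_all add: ac_simps)
  then have "cubic_poly4 (\<lambda>a b c d. K b a c d) x1 x2 x3 x4 = cubic_poly4 K x1 x2 x3 x4"
       "cubic_poly4 (\<lambda>a b c d. K a c b d) x1 x2 x3 x4 = cubic_poly4 K x1 x2 x3 x4"
       "cubic_poly4 (\<lambda>a b c d. K a b d c) x1 x2 x3 x4 = cubic_poly4 K x1 x2 x3 x4"
    for x1 x2 x3 x4
    using symmetric4_adjacent_swaps[OF sym, of x1 x2 x3 x4] by (simp_all add: f_eq)
  from cubic_poly4_coeffs_unique[OF this(1)] cubic_poly4_coeffs_unique[OF this(2)]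
    cubic_poly4_coeffs_unique[OF this(3)]
  have K_sym: "K a b c d = K b a c d" "K a b c d = K a c b d" "K a b c d = K a b d c"
    if "a + b + c + d = 3" for a b c d
    using that by (simp_all add: ac_simps)
  have "f (vector [x1, x2, x3, x4]) =
    K 3 0 0 0 * m3 x1 x2 x3 x4 + K 2 1 0 0 * m21 x1 x2 x3 x4 + K 1 1 1 0 * m111 x1 x2 x3 x4"
    for x1 x2 x3 x4
    \<comment> \<open>\<open>K_sym\<close> is permutative, so simp rewrites each coefficient to one orbit representative.\<close>
    unfolding f_eq cubic_poly4_def m3_def m21_def m111_def
    by (simp add: K_sym) (simp add: algebra_simps)
  then show ?thesis using that by blast
qed

lemma m111_nonneg:
  assumes "0 \<le> x1" "0 \<le> x2" "0 \<le> x3" "0 \<le> x4"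
  shows "0 \<le> m111 x1 x2 x3 x4"
  unfolding m111_def using assms by simp

lemma three_m111_le_m21:
  assumes "0 \<le> x1" "0 \<le> x2" "0 \<le> x3" "0 \<le> x4"
  shows "3 * m111 x1 x2 x3 x4 \<le> m21 x1 x2 x3 x4"
proof -
  have "0 \<le> x1 * (x2 - x3)^2 + x2 * (x1 - x3)^2 + x3 * (x1 - x2)^2 +
      x1 * (x2 - x4)^2 + x2 * (x1 - x4)^2 + x4 * (x1 - x2)^2 +
      x1 * (x3 - x4)^2 + x3 * (x1 - x4)^2 + x4 * (x1 - x3)^2 +
      x2 * (x3 - x4)^2 + x3 * (x2 - x4)^2 + x4 * (x2 - x3)^2"
    using assms by simp
  also have "\<dots> = 2 * (m21 x1 x2 x3 x4 - 3 * m111 x1 x2 x3 x4)"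
    unfolding m21_def m111_def by (simp add: power2_eq_square algebra_simps)
  finally show ?thesis by simp
qed

lemma nonneg_if_nonneg_on_sorted4:
  fixes P :: "real \<Rightarrow> real \<Rightarrow> real \<Rightarrow> real \<Rightarrow> real"
  assumes swap12: "\<And>a b c d. P a b c d = P b a c d"
    and swap23: "\<And>a b c d. P a b c d = P a c b d"
    and swap34: "\<And>a b c d. P a b c d = P a b d c"
    and sorted: "\<And>a b c d. a \<ge> b \<Longrightarrow> b \<ge> c \<Longrightarrow> c \<ge> d \<Longrightarrow> d \<ge> 0 \<Longrightarrow> 0 \<le> P a b c d"
    and "0 \<le> a" "0 \<le> b" "0 \<le> c" "0 \<le> d"
  shows "0 \<le> P a b c d"
proof -
  have sorted_tail3: "0 \<le> P a b c d" if "b \<ge> c" "c \<ge> d" "d \<ge> 0" "a \<ge> 0" for a b c d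
  proof -
    consider "a \<ge> b" | "b \<ge> a" "a \<ge> c" | "c \<ge> a" "a \<ge> d" | "d \<ge> a"
      using that by linarith
    then show ?thesis
    proof cases
      case 1 then show ?thesis using that by (intro sorted)
    next
      case 2 then have "0 \<le> P b a c d" using that by (intro sorted) auto
      then show ?thesis by (metis swap12)
    next
      case 3 then have "0 \<le> P b c a d" using that by (intro sorted) auto
      then show ?thesis by (metis swap12 swap23)
    next
      case 4 then have "0 \<le> P b c d a" using that by (intro sorted) auto
      then show ?thesis by (metis swap12 swap23 swap34)
    qed
  qed
  have sorted_tail2: "0 \<le> P a b c d" if "c \<ge> d" "d \<ge> 0" "a \<ge> 0" "b \<ge> 0" for a b c d
  proof -
    consider "b \<ge> c" | "c \<ge> b" "b \<ge> d" | "d \<ge> b"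
      using that by linarith
    then show ?thesis
    proof cases
      case 1 then show ?thesis using that by (intro sorted_tail3)
    next
      case 2 then have "0 \<le> P a c b d" using that by (intro sorted_tail3) auto
      then show ?thesis by (metis swap23)
    next
      case 3 then have "0 \<le> P a c d b" using that by (intro sorted_tail3) auto
      then show ?thesis by (metis swap23 swap34)
    qed
  qed
  show ?thesis
  proof (cases "c \<ge> d")
    case True then show ?thesis using assms by (intro sorted_tail2)
  next
    case False then have "0 \<le> P a b d c" using assms by (intro sorted_tail2) auto
    then show ?thesis by (metis swap34)
  qed
qed

lemma m3_m21_m111_swaps:
  "m3 a b c d = m3 b a c d" "m3 a b c d = m3 a c b d" "m3 a b c d = m3 a b d c"
  "m21 a b c d = m21 b a c d" "m21 a b c d = m21 a c b d" "m21 a b c d = m21 a b d c"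
  "m111 a b c d = m111 b a c d" "m111 a b c d = m111 a c b d" "m111 a b c d = m111 a b d c"
  unfolding m3_def m21_def m111_def by (simp_all add: algebra_simps)

lemma symmetric_cubic_nonneg_if_nonneg_on_sorted:
  assumes sorted: "\<And>a b c d. a \<ge> b \<Longrightarrow> b \<ge> c \<Longrightarrow> c \<ge> d \<Longrightarrow> d \<ge> 0 \<Longrightarrow>
      0 \<le> \<alpha> * m3 a b c d + \<beta> * m21 a b c d + \<gamma> * m111 a b c d"
    and "0 \<le> x1" "0 \<le> x2" "0 \<le> x3" "0 \<le> x4"
  shows "0 \<le> \<alpha> * m3 x1 x2 x3 x4 + \<beta> * m21 x1 x2 x3 x4 + \<gamma> * m111 x1 x2 x3 x4"
  by (rule nonneg_if_nonneg_on_sorted4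
      [where P = "\<lambda>a b c d. \<alpha> * m3 a b c d + \<beta> * m21 a b c d + \<gamma> * m111 a b c d"])
    (simp_all add: m3_m21_m111_swaps sorted assms(2-5))

lemma m21_le_m3_plus_three_m111:
  assumes "0 \<le> x1" "0 \<le> x2" "0 \<le> x3" "0 \<le> x4"
  shows "m21 x1 x2 x3 x4 \<le> m3 x1 x2 x3 x4 + 3 * m111 x1 x2 x3 x4"
proof -
  have "0 \<le> 1 * m3 a b c d + (-1) * m21 a b c d + 3 * m111 a b c d"
    if "a \<ge> b" "b \<ge> c" "c \<ge> d" "d \<ge> 0" for a b c d
  proof -
    define p q r where "p = c - d" and "q = b - c" and "r = a - b"
    have "p \<ge> 0" "q \<ge> 0" "r \<ge> 0" using that by (simp_all add: p_def q_def r_def)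
    then have "0 \<le> r^3 + 2 * q * r^2 + p * r^2 + p * q * r + p * q^2 + 2 * d * q * r +
        2 * d * q^2 + 4 * d * p * r + 8 * d * p * q + 6 * d * p^2 + 3 * d^2 * r + 6 * d^2 * q +
        9 * d^2 * p + 4 * d^3"
      using \<open>d \<ge> 0\<close> by simp
    moreover have "c = d + p" "b = d + p + q" "a = d + p + q + r"
      by (simp_all add: p_def q_def r_def)
    ultimately show ?thesis
      unfolding m3_def m21_def m111_def by (simp add: power2_eq_square power3_eq_cube algebra_simps)
  qed
  from symmetric_cubic_nonneg_if_nonneg_on_sorted[OF this assms] show ?thesis by simp
qed

lemma two_m21_le_three_m3_plus_three_m111:
  assumes "0 \<le> x1" "0 \<le> x2" "0 \<le> x3" "0 \<le> x4"
  shows "2 * m21 x1 x2 x3 x4 \<le> 3 * m3 x1 x2 x3 x4 + 3 * m111 x1 x2 x3 x4"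
proof -
  have "0 \<le> 3 * m3 a b c d + (-2) * m21 a b c d + 3 * m111 a b c d"
    if "a \<ge> b" "b \<ge> c" "c \<ge> d" "d \<ge> 0" for a b c d
  proof -
    define p q r where "p = c - d" and "q = b - c" and "r = a - b"
    have "p \<ge> 0" "q \<ge> 0" "r \<ge> 0" using that by (simp_all add: p_def q_def r_def)
    then have "0 \<le> 3 * r^3 + 7 * q * r^2 + 3 * q^2 * r + 2 * q^3 + 5 * p * r^2 + 5 * p * q * r +
        5 * p * q^2 + 3 * d * r^2 + 4 * d * q * r + 4 * d * q^2 + 2 * d * p * r + 4 * d * p * q +
        3 * d * p^2"
      using \<open>d \<ge> 0\<close> by simp
    moreover have "c = d + p" "b = d + p + q" "a = d + p + q + r"
      by (simp_all add: p_def q_def r_def)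
    ultimately show ?thesis
      unfolding m3_def m21_def m111_def by (simp add: power2_eq_square power3_eq_cube algebra_simps)
  qed
  from symmetric_cubic_nonneg_if_nonneg_on_sorted[OF this assms] show ?thesis by simp
qed

lemma nonneg_on_cone_of_test_values:
  fixes A B C M3 M21 M111 :: real
  assumes "0 \<le> A" "0 \<le> 2 * A + 2 * B" "0 \<le> 3 * A + 6 * B + C" "0 \<le> 4 * A + 12 * B + 4 * C"
    and "0 \<le> M111" "3 * M111 \<le> M21" "M21 \<le> M3 + 3 * M111" "2 * M21 \<le> 3 * M3 + 3 * M111"
  shows "0 \<le> A * M3 + B * M21 + C * M111"
  \<comment> \<open>The plane \<open>M21 = M3 + 2 M111\<close> through the images of \<open>(0,0,1,1)\<close> and \<open>(1,1,1,1)\<close>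
    splits the cone into two simplicial cones.\<close>
proof (cases "M21 \<le> M3 + 2 * M111")
  case True
  have "0 \<le> A * (M3 - M21 + 2 * M111)" "0 \<le> (A + B) * (M21 - 3 * M111)"
      "0 \<le> (A + 3 * B + C) * M111"
    using True assms by (intro mult_nonneg_nonneg; linarith)+
  then have "0 \<le> A * (M3 - M21 + 2 * M111) + (A + B) * (M21 - 3 * M111) + (A + 3 * B + C) * M111"
    by linarith
  also have "\<dots> = A * M3 + B * M21 + C * M111"
    by (simp add: algebra_simps)
  finally show ?thesis .
next
  case False
  have "0 \<le> (A + B) * (3 * M3 - 2 * M21 + 3 * M111)"
      "0 \<le> (3 * A + 6 * B + C) * (M21 - M3 - 2 * M111)"
      "0 \<le> (A + 3 * B + C) * (M3 - M21 + 3 * M111)"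
    using False assms by (intro mult_nonneg_nonneg; linarith)+
  then have "0 \<le> (A + B) * (3 * M3 - 2 * M21 + 3 * M111)
      + (3 * A + 6 * B + C) * (M21 - M3 - 2 * M111) + (A + 3 * B + C) * (M3 - M21 + 3 * M111)"
    by linarith
  also have "\<dots> = A * M3 + B * M21 + C * M111"
    by (simp add: algebra_simps)
  finally show ?thesis .
qed

theorem corollary2p8:
  assumes "f \<in> H_s_4_3"
  shows "f \<in> P_splus_4_3 \<longleftrightarrow>
           0 \<le> f (vector [0, 0, 0, 1]) \<and> 0 \<le> f (vector [0, 0, 1, 1]) \<and>
           0 \<le> f (vector [0, 1, 1, 1]) \<and> 0 \<le> f (vector [1, 1, 1, 1])"
proof -
  obtain A B C where f_eq: "\<And>x1 x2 x3 x4. f (vector [x1, x2, x3, x4]) =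
      A * m3 x1 x2 x3 x4 + B * m21 x1 x2 x3 x4 + C * m111 x1 x2 x3 x4"
    using symmetric_cubic_form4_eq[OF assms] by blast
  have test_values: "f (vector [0, 0, 0, 1]) = A" "f (vector [0, 0, 1, 1]) = 2 * A + 2 * B"
      "f (vector [0, 1, 1, 1]) = 3 * A + 6 * B + C" "f (vector [1, 1, 1, 1]) = 4 * A + 12 * B + 4 * C"
    by (simp_all add: f_eq m3_def m21_def m111_def)
  have "0 \<le> f x" if "\<forall>i. 0 \<le> x $ i"
      "0 \<le> f (vector [0, 0, 0, 1])" "0 \<le> f (vector [0, 0, 1, 1])"
      "0 \<le> f (vector [0, 1, 1, 1])" "0 \<le> f (vector [1, 1, 1, 1])" for x
  proof -
    have "0 \<le> x $ 1" "0 \<le> x $ 2" "0 \<le> x $ 3" "0 \<le> x $ 4" using that(1) by simp_all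
    note orthant_bounds = m111_nonneg[OF this] three_m111_le_m21[OF this]
      m21_le_m3_plus_three_m111[OF this] two_m21_le_three_m3_plus_three_m111[OF this]
    show ?thesis
      using nonneg_on_cone_of_test_values[OF that(2-5)[unfolded test_values] orthant_bounds]
        f_eq[of "x $ 1" "x $ 2" "x $ 3" "x $ 4"]
      by (simp add: vector_4_eta)
  qed
  then show ?thesis
    using assms unfolding P_splus_4_3_def by (auto simp: forall_4)
qed

end
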